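(* In the sleeping multi-armed bandit setting, let $(\ell_t)_{t\ge1}$ be i.i.d. random loss vectors in $[0,1]^K$ with mean vector $\mu$, where for each $t$, $\ell_t$ is independent of everything determined before the learner observes $\ell_t(k_t)$ at round $t$ (including $S_1,\dots,S_t$ and $k_1,\dots,k_t$), and let $(S_t)_{t\ge1}$ be any sequence of availability sets such that $S_t$ may depend only on $(\ell_s)_{s\le t-1}$ (and past play). Then for any algorithm, $$\max_{1\le i,j\le K}\mathbb E\big[R_T^{\mathrm{int}}(i\to j)\big]\le\max_{\sigma}\mathbb E\big[R_T^{\mathrm{ordering}}(\sigma)\big],$$ the maximum on the right being over all orderings $\sigma$ of $[K]$.
   Context: Sleeping multi-armed bandit setting: $K$ arms $[K]$. At each round $t$ a nonempty availability set $S_t\subseteq[K]$ is revealed, the learner (possibly randomized, using only $S_1,\dots,S_t$, previously observed losses and internal randomness) selects $k_t\in S_t$ and observes $\ell_t(k_t)$. Internal sleeping regret: $R_T^{\mathrm{int}}(i\to j)=\sum_{t=1}^T\big(\ell_t(k_t)-\ell_t(j)\big)\mathbf 1\{k_t=i,\ j\in S_t\}$. An ordering is a permutation $\sigma=(\sigma_1,\dots,\sigma_K)$ of $[K]$; for nonempty $S\subseteq[K]$, $\sigma(S)=\sigma_m$ with $m=\min\{i:\sigma_i\in S\}$. Ordering regret: $R_T^{\mathrm{ordering}}(\sigma)=\sum_{t=1}^T\big(\ell_t(k_t)-\ell_t(\sigma(S_t))\big)$. *)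

theory Defs
  imports "HOL-Probability.Probability" "HOL-Combinatorics.Multiset_Permutations"
begin

text \<open>Arms are 0,...,K-1 (the set {..<K}); rounds are t = 1,2,...
  An ordering is a list in permutations_of_set {..<K}.\<close>

definition order_choice :: "nat list \<Rightarrow> nat set \<Rightarrow> nat" where
  "order_choice \<sigma> S = hd (filter (\<lambda>x. x \<in> S) \<sigma>)"

definition internal_regret ::
  "(nat \<Rightarrow> 'a \<Rightarrow> nat \<Rightarrow> real) \<Rightarrow> (nat \<Rightarrow> 'a \<Rightarrow> nat set) \<Rightarrow> (nat \<Rightarrow> 'a \<Rightarrow> nat)
   \<Rightarrow> nat \<Rightarrow> nat \<Rightarrow> nat \<Rightarrow> 'a \<Rightarrow> real" where
  "internal_regret L S k T i j \<omega> =
     (\<Sum>t=1..T. (L t \<omega> (k t \<omega>) - L t \<omega> j) *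
        (if k t \<omega> = i \<and> j \<in> S t \<omega> then 1 else 0))"

definition ordering_regret ::
  "(nat \<Rightarrow> 'a \<Rightarrow> nat \<Rightarrow> real) \<Rightarrow> (nat \<Rightarrow> 'a \<Rightarrow> nat set) \<Rightarrow> (nat \<Rightarrow> 'a \<Rightarrow> nat)
   \<Rightarrow> nat \<Rightarrow> nat list \<Rightarrow> 'a \<Rightarrow> real" where
  "ordering_regret L S k T \<sigma> \<omega> =
     (\<Sum>t=1..T. L t \<omega> (k t \<omega>) - L t \<omega> (order_choice \<sigma> (S t \<omega>)))"

definition loss_events :: "'a measure \<Rightarrow> nat \<Rightarrow> (nat \<Rightarrow> 'a \<Rightarrow> nat \<Rightarrow> real) \<Rightarrow> nat \<Rightarrow> 'a set set" where
  "loss_events M K L t = {{\<omega>\<in>space M. L t \<omega> j \<in> B} | j B. j < K \<and> B \<in> sets borel}"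

definition avail_events :: "'a measure \<Rightarrow> (nat \<Rightarrow> 'a \<Rightarrow> nat set) \<Rightarrow> nat \<Rightarrow> 'a set set" where
  "avail_events M S s = {{\<omega>\<in>space M. S s \<omega> = A} | A. True}"

definition arm_events :: "'a measure \<Rightarrow> (nat \<Rightarrow> 'a \<Rightarrow> nat) \<Rightarrow> nat \<Rightarrow> 'a set set" where
  "arm_events M k s = {{\<omega>\<in>space M. k s \<omega> = i} | i. True}"

definition obs_events :: "'a measure \<Rightarrow> (nat \<Rightarrow> 'a \<Rightarrow> nat \<Rightarrow> real) \<Rightarrow> (nat \<Rightarrow> 'a \<Rightarrow> nat) \<Rightarrow> nat \<Rightarrow> 'a set set" where
  "obs_events M L k s = {{\<omega>\<in>space M. L s \<omega> (k s \<omega>) \<in> B} | B. B \<in> sets borel}"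

definition rand_events :: "'a measure \<Rightarrow> 'b measure \<Rightarrow> ('a \<Rightarrow> 'b) \<Rightarrow> 'a set set" where
  "rand_events M N U = {{\<omega>\<in>space M. U \<omega> \<in> B} | B. B \<in> sets N}"

text \<open>Everything determined before the learner observes the loss of round t:
  internal randomness, losses of rounds s < t, availability sets and chosen arms of rounds s \<le> t.\<close>
definition past_sigma ::
  "'a measure \<Rightarrow> 'b measure \<Rightarrow> ('a \<Rightarrow> 'b) \<Rightarrow> nat \<Rightarrow> (nat \<Rightarrow> 'a \<Rightarrow> nat \<Rightarrow> real)
   \<Rightarrow> (nat \<Rightarrow> 'a \<Rightarrow> nat set) \<Rightarrow> (nat \<Rightarrow> 'a \<Rightarrow> nat) \<Rightarrow> nat \<Rightarrow> 'a set set" where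
  "past_sigma M N U K L S k t = sigma_sets (space M)
     (rand_events M N U \<union> (\<Union>s\<in>{1..<t}. loss_events M K L s)
      \<union> (\<Union>s\<in>{1..t}. avail_events M S s \<union> arm_events M k s))"

end

theory Submission
  imports Defs
begin

text \<open>Sort the arms by mean loss; the resulting ordering plays the best available arm of every
  availability set. The loss vector of round t is independent of everything determined before
  it is observed, in particular of the chosen arm, of the availability set and of the event
  that arm i is played while j is available. Hence, in expectation, every loss may be replaced
  by the mean of the arm at which it is evaluated, and round t contributes
  E[(\<mu>(k_t) - \<mu>(j)) 1{k_t = i, j \<in> S_t}] to the internal regret and
  E[\<mu>(k_t) - \<mu>(\<sigma>(S_t))] to the ordering regret of the sorted ordering \<sigma>.
  The first is pointwise at most the second, since \<mu>(\<sigma>(S_t)) is at most both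
  \<mu>(k_t) and, when j \<in> S_t, \<mu>(j).\<close>

lemma sorted_hd_filter_le:
  fixes f :: "'a \<Rightarrow> 'b::linorder"
  assumes "sorted (map f xs)" "x \<in> set xs" "P x"
  shows "P (hd (filter P xs)) \<and> f (hd (filter P xs)) \<le> f x"
  using assms
proof (induction xs)
  case Nil
  then show ?case by simp
next
  case (Cons y ys)
  show ?case
  proof (cases "P y")
    case True
    then show ?thesis using Cons.prems by auto
  next
    case False
    then have "x \<in> set ys" using Cons.prems by auto
    with Cons.IH Cons.prems False show ?thesis by simp
  qed
qed

lemma sum_indicator_level_sets:
  fixes F :: "'a \<Rightarrow> nat \<Rightarrow> real"
  assumes "\<omega> \<in> space M" "X \<omega> < K"
  shows "(\<Sum>a<K. F \<omega> a * indicator {\<omega>\<in>space M. X \<omega> = a} \<omega>) = F \<omega> (X \<omega>)"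
proof -
  have "(\<Sum>a<K. F \<omega> a * indicator {\<omega>\<in>space M. X \<omega> = a} \<omega>) = (\<Sum>a<K. if a = X \<omega> then F \<omega> a else 0)"
    using assms(1) by (intro sum.cong) (auto simp: indicator_def)
  then show ?thesis using assms(2) by simp
qed

lemma
  fixes X :: "'a \<Rightarrow> nat" and F :: "'a \<Rightarrow> nat \<Rightarrow> real"
  assumes X: "\<And>\<omega>. \<omega> \<in> space M \<Longrightarrow> X \<omega> < K"
    and level: "\<And>a. a < K \<Longrightarrow> {\<omega>\<in>space M. X \<omega> = a} \<in> sets M"
    and F: "\<And>a. a < K \<Longrightarrow> integrable M (\<lambda>\<omega>. F \<omega> a)"
  shows integrable_at_finite_index: "integrable M (\<lambda>\<omega>. F \<omega> (X \<omega>))"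
    and integral_at_finite_index: "(\<integral>\<omega>. F \<omega> (X \<omega>) \<partial>M)
      = (\<Sum>a<K. \<integral>\<omega>. F \<omega> a * indicator {\<omega>\<in>space M. X \<omega> = a} \<omega> \<partial>M)"
proof -
  let ?G = "\<lambda>\<omega>. \<Sum>a<K. F \<omega> a * indicator {\<omega>\<in>space M. X \<omega> = a} \<omega>"
  have G_eq: "\<And>\<omega>. \<omega> \<in> space M \<Longrightarrow> ?G \<omega> = F \<omega> (X \<omega>)"
    by (intro sum_indicator_level_sets X)
  have summands: "\<And>a. a \<in> {..<K} \<Longrightarrow> integrable M (\<lambda>\<omega>. F \<omega> a * indicator {\<omega>\<in>space M. X \<omega> = a} \<omega>)"
    using F level by (auto intro: integrable_real_mult_indicator)
  then have "integrable M ?G" by (rule Bochner_Integration.integrable_sum)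
  then show "integrable M (\<lambda>\<omega>. F \<omega> (X \<omega>))"
    using G_eq by (simp cong: Bochner_Integration.integrable_cong)
  have "(\<integral>\<omega>. F \<omega> (X \<omega>) \<partial>M) = integral\<^sup>L M ?G"
    using G_eq by (intro Bochner_Integration.integral_cong) auto
  also have "\<dots> = (\<Sum>a<K. \<integral>\<omega>. F \<omega> a * indicator {\<omega>\<in>space M. X \<omega> = a} \<omega> \<partial>M)"
    using summands by (rule Bochner_Integration.integral_sum)
  finally show "(\<integral>\<omega>. F \<omega> (X \<omega>) \<partial>M)
      = (\<Sum>a<K. \<integral>\<omega>. F \<omega> a * indicator {\<omega>\<in>space M. X \<omega> = a} \<omega> \<partial>M)" .
qed

lemma (in prob_space) indep_var_if_indep_set:
  assumes "indep_set A B" "random_variable S X" "random_variable T Y"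
    and "sigma_sets (space M) {X -` C \<inter> space M | C. C \<in> sets S} \<subseteq> A"
    and "sigma_sets (space M) {Y -` C \<inter> space M | C. C \<in> sets T} \<subseteq> B"
  shows "indep_var S X T Y"
proof -
  have "indep_set (sigma_sets (space M) {X -` C \<inter> space M | C. C \<in> sets S})
                  (sigma_sets (space M) {Y -` C \<inter> space M | C. C \<in> sets T})"
    using assms(1) unfolding indep_set_def
    by (rule indep_sets_mono_sets) (use assms(4,5) in \<open>auto split: bool.split\<close>)
  then show ?thesis using assms(2,3) by (simp add: indep_var_eq)
qed

lemma (in sigma_algebra) sigma_sets_indicator_preimages_subset:
  assumes "E \<in> M"
  shows "sigma_sets \<Omega> {(indicator E :: 'a \<Rightarrow> real) -` C \<inter> \<Omega> | C. C \<in> sets borel} \<subseteq> M"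
proof (rule sigma_sets_subset, rule subsetI)
  fix D assume "D \<in> {(indicator E :: 'a \<Rightarrow> real) -` C \<inter> \<Omega> | C. C \<in> sets borel}"
  then obtain C :: "real set" where D: "D = indicator E -` C \<inter> \<Omega>" by blast
  have "D = (if 1 \<in> C then E else {}) \<union> (if 0 \<in> C then \<Omega> - E else {})"
    unfolding D using sets_into_space[OF assms] by (auto simp: indicator_def of_bool_def split: if_splits)
  then show "D \<in> M" using assms by auto
qed

text \<open>The hypotheses of the theorem, without the independence of the losses across rounds and
  without \<mu>: freshness of each loss vector with respect to the past is all the argument needs.\<close>
locale sleeping_bandit = prob_space M
  for M :: "'a measure" +
  fixes N :: "'b measure" and U :: "'a \<Rightarrow> 'b" and K :: nat
    and L :: "nat \<Rightarrow> 'a \<Rightarrow> nat \<Rightarrow> real"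
    and S :: "nat \<Rightarrow> 'a \<Rightarrow> nat set" and k :: "nat \<Rightarrow> 'a \<Rightarrow> nat"
  assumes U_meas: "U \<in> M \<rightarrow>\<^sub>M N"
    and L_meas: "\<And>t j. t \<ge> 1 \<Longrightarrow> j < K \<Longrightarrow> (\<lambda>\<omega>. L t \<omega> j) \<in> borel_measurable M"
    and L_range: "\<And>t j \<omega>. t \<ge> 1 \<Longrightarrow> j < K \<Longrightarrow> \<omega> \<in> space M \<Longrightarrow> L t \<omega> j \<in> {0..1}"
    and L_ident: "\<And>t. t \<ge> 1 \<Longrightarrow>
        distr M (PiM {..<K} (\<lambda>_. borel)) (\<lambda>\<omega>. restrict (L t \<omega>) {..<K})
      = distr M (PiM {..<K} (\<lambda>_. borel)) (\<lambda>\<omega>. restrict (L 1 \<omega>) {..<K})"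
    and L_fresh: "\<And>t. t \<ge> 1 \<Longrightarrow> indep_set
        (sigma_sets (space M) (loss_events M K L t)) (past_sigma M N U K L S k t)"
    and S_valid: "\<And>t \<omega>. t \<ge> 1 \<Longrightarrow> \<omega> \<in> space M \<Longrightarrow> S t \<omega> \<subseteq> {..<K} \<and> S t \<omega> \<noteq> {}"
    and k_valid: "\<And>t \<omega>. t \<ge> 1 \<Longrightarrow> \<omega> \<in> space M \<Longrightarrow> k t \<omega> \<in> S t \<omega>"
    and S_adapted: "\<And>t A. t \<ge> 1 \<Longrightarrow> {\<omega>\<in>space M. S t \<omega> = A} \<in> sigma_sets (space M)
        (\<Union>s\<in>{1..<t}. loss_events M K L s \<union> avail_events M S s \<union> arm_events M k s)"
    and k_adapted: "\<And>t i. t \<ge> 1 \<Longrightarrow> {\<omega>\<in>space M. k t \<omega> = i} \<in> sigma_sets (space M)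
        (rand_events M N U \<union> (\<Union>s\<in>{1..t}. avail_events M S s)
         \<union> (\<Union>s\<in>{1..<t}. obs_events M L k s \<union> arm_events M k s))"
begin

abbreviation past :: "nat \<Rightarrow> 'a set set" where
  "past t \<equiv> past_sigma M N U K L S k t"

definition mean :: "nat \<Rightarrow> real" where
  "mean a = (\<integral>\<omega>. L 1 \<omega> a \<partial>M)"

definition past_arm :: "nat \<Rightarrow> ('a \<Rightarrow> nat) \<Rightarrow> bool" where
  "past_arm t X \<longleftrightarrow> (\<forall>\<omega>\<in>space M. X \<omega> < K) \<and> (\<forall>a. {\<omega>\<in>space M. X \<omega> = a} \<in> past t)"

lemma arm_less: "t \<ge> 1 \<Longrightarrow> \<omega> \<in> space M \<Longrightarrow> k t \<omega> < K"
  using k_valid S_valid by blast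

lemma loss_level_set: "t \<ge> 1 \<Longrightarrow> j < K \<Longrightarrow> B \<in> sets borel \<Longrightarrow> {\<omega>\<in>space M. L t \<omega> j \<in> B} \<in> events"
  using measurable_sets[OF L_meas] by (simp add: vimage_def Int_def conj_commute)

lemma loss_events_subset: "t \<ge> 1 \<Longrightarrow> loss_events M K L t \<subseteq> events"
  unfolding loss_events_def using loss_level_set by auto

lemma rand_events_subset: "rand_events M N U \<subseteq> events"
  unfolding rand_events_def using measurable_sets[OF U_meas] by (auto simp: vimage_def Int_def conj_commute)

lemma obs_events_subset:
  assumes "s \<ge> 1" and "\<And>i. {\<omega>\<in>space M. k s \<omega> = i} \<in> events"
  shows "obs_events M L k s \<subseteq> events"
proof -
  have "{\<omega>\<in>space M. L s \<omega> (k s \<omega>) \<in> B} \<in> events" if "B \<in> sets borel" for B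
  proof -
    have "{\<omega>\<in>space M. L s \<omega> (k s \<omega>) \<in> B}
        = (\<Union>i<K. {\<omega>\<in>space M. k s \<omega> = i} \<inter> {\<omega>\<in>space M. L s \<omega> i \<in> B})"
      using arm_less[OF assms(1)] by auto
    then show ?thesis using assms loss_level_set[OF assms(1) _ that] by auto
  qed
  then show ?thesis unfolding obs_events_def by auto
qed

text \<open>Measurability of the availability sets and the arms is not assumed; it follows by
  strong induction on the round from the adaptedness hypotheses.\<close>
lemma avail_arm_events:
  "t \<ge> 1 \<Longrightarrow> (\<forall>A. {\<omega>\<in>space M. S t \<omega> = A} \<in> events) \<and> (\<forall>i. {\<omega>\<in>space M. k t \<omega> = i} \<in> events)"
proof (induction t rule: less_induct)
  case (less t)
  have before: "avail_events M S s \<subseteq> events" "arm_events M k s \<subseteq> events"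
    "obs_events M L k s \<subseteq> events" if s: "s \<in> {1..<t}" for s
  proof -
    have "s < t" "s \<ge> 1" using s by auto
    then have "\<forall>A. {\<omega>\<in>space M. S s \<omega> = A} \<in> events" "\<forall>i. {\<omega>\<in>space M. k s \<omega> = i} \<in> events"
      using less.IH by blast+
    then show "avail_events M S s \<subseteq> events" "arm_events M k s \<subseteq> events"
      "obs_events M L k s \<subseteq> events"
      using obs_events_subset[OF \<open>s \<ge> 1\<close>] unfolding avail_events_def arm_events_def by auto
  qed
  have S_gen: "(\<Union>s\<in>{1..<t}. loss_events M K L s \<union> avail_events M S s \<union> arm_events M k s) \<subseteq> events"
  proof (intro UN_least Un_least)
    fix s assume "s \<in> {1..<t}"
    then show "loss_events M K L s \<subseteq> events" "avail_events M S s \<subseteq> events"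
      "arm_events M k s \<subseteq> events"
      using before loss_events_subset by auto
  qed
  have avail: "\<forall>A. {\<omega>\<in>space M. S t \<omega> = A} \<in> events"
    using subsetD[OF sets.sigma_sets_subset[OF S_gen] S_adapted[OF less.prems]] by blast
  then have "avail_events M S s \<subseteq> events" if "s \<in> {1..t}" for s
    using before(1)[of s] that unfolding avail_events_def by (cases "s = t") auto
  then have k_gen: "rand_events M N U \<union> (\<Union>s\<in>{1..t}. avail_events M S s)
         \<union> (\<Union>s\<in>{1..<t}. obs_events M L k s \<union> arm_events M k s) \<subseteq> events"
    using before(2,3) rand_events_subset by (intro UN_least Un_least) simp_all
  have "\<forall>i. {\<omega>\<in>space M. k t \<omega> = i} \<in> events"
    using subsetD[OF sets.sigma_sets_subset[OF k_gen] k_adapted[OF less.prems]] by blast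
  with avail show ?case ..
qed

lemma past_subset_events:
  assumes "t \<ge> 1"
  shows "past t \<subseteq> events"
  unfolding past_sigma_def
proof (intro sets.sigma_sets_subset UN_least Un_least)
  fix s assume s: "s \<in> {1..t}"
  then show "avail_events M S s \<subseteq> events" "arm_events M k s \<subseteq> events"
    using avail_arm_events[of s] unfolding avail_events_def arm_events_def by auto
qed (use rand_events_subset loss_events_subset in auto)

lemma sigma_algebra_past: "sigma_algebra (space M) (past t)"
  unfolding past_sigma_def
  by (rule sigma_algebra_sigma_sets)
     (auto simp: rand_events_def loss_events_def avail_events_def arm_events_def)

lemma past_event_of_round:
  assumes t: "t \<ge> 1"
  shows "{\<omega>\<in>space M. Q (S t \<omega>) (k t \<omega>)} \<in> past t"
proof -
  interpret past: sigma_algebra "space M" "past t" by (rule sigma_algebra_past)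
  have t_now: "t \<in> {1..t}" using t by simp
  have avail: "{\<omega>\<in>space M. S t \<omega> = A} \<in> past t" for A
    unfolding past_sigma_def
    by (rule sigma_sets.Basic, rule UnI2, rule UN_I[OF t_now], rule UnI1) (auto simp: avail_events_def)
  have arm: "{\<omega>\<in>space M. k t \<omega> = b} \<in> past t" for b
    unfolding past_sigma_def
    by (rule sigma_sets.Basic, rule UnI2, rule UN_I[OF t_now], rule UnI2) (auto simp: arm_events_def)
  have "{\<omega>\<in>space M. Q (S t \<omega>) (k t \<omega>)} = (\<Union>A\<in>Pow {..<K}. \<Union>b\<in>{b\<in>{..<K}. Q A b}.
      {\<omega>\<in>space M. S t \<omega> = A} \<inter> {\<omega>\<in>space M. k t \<omega> = b})" (is "_ = ?U")
  proof (intro equalityI subsetI)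
    fix \<omega> assume "\<omega> \<in> {\<omega>\<in>space M. Q (S t \<omega>) (k t \<omega>)}"
    moreover have "S t \<omega> \<in> Pow {..<K}" "k t \<omega> < K" if "\<omega> \<in> space M"
      using S_valid[OF t that] arm_less[OF t that] by auto
    ultimately show "\<omega> \<in> ?U" by blast
  qed auto
  then show ?thesis using avail arm by (simp add: past.finite_UN past.Int)
qed

lemma past_arm_of_round:
  assumes "t \<ge> 1" and "\<And>A b. A \<subseteq> {..<K} \<Longrightarrow> b \<in> A \<Longrightarrow> f A b < K"
  shows "past_arm t (\<lambda>\<omega>. f (S t \<omega>) (k t \<omega>))"
proof -
  have "{\<omega>\<in>space M. f (S t \<omega>) (k t \<omega>) = a} \<in> past t" for a
    using past_event_of_round[OF assms(1), of "\<lambda>A b. f A b = a"] by simp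
  moreover have "f (S t \<omega>) (k t \<omega>) < K" if "\<omega> \<in> space M" for \<omega>
    using assms(2) S_valid[OF assms(1) that] k_valid[OF assms(1) that] by simp
  ultimately show ?thesis unfolding past_arm_def by simp
qed

lemma past_arm_events: "t \<ge> 1 \<Longrightarrow> past_arm t X \<Longrightarrow> {\<omega>\<in>space M. X \<omega> = a} \<in> events"
  unfolding past_arm_def using past_subset_events by blast

lemma integrable_at_past_arm:
  fixes F :: "'a \<Rightarrow> nat \<Rightarrow> real"
  assumes "t \<ge> 1" "past_arm t X" "\<And>a. a < K \<Longrightarrow> integrable M (\<lambda>\<omega>. F \<omega> a)"
  shows "integrable M (\<lambda>\<omega>. F \<omega> (X \<omega>))"
proof (rule integrable_at_finite_index[where F=F and X=X])
  show "\<And>\<omega>. \<omega> \<in> space M \<Longrightarrow> X \<omega> < K" using assms(2) unfolding past_arm_def by blast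
qed (use assms past_arm_events in auto)

lemma loss_integrable: "t \<ge> 1 \<Longrightarrow> a < K \<Longrightarrow> integrable M (\<lambda>\<omega>. L t \<omega> a)"
  using L_meas L_range by (intro integrable_const_bound[where B=1] AE_I2) auto

lemma integrable_loss_at_past_arm:
  assumes "t \<ge> 1" "past_arm t X"
  shows "integrable M (\<lambda>\<omega>. L t \<omega> (X \<omega>))"
  by (rule integrable_at_past_arm[OF assms loss_integrable[OF assms(1)]])

lemma integrable_mean_at_past_arm: "t \<ge> 1 \<Longrightarrow> past_arm t X \<Longrightarrow> integrable M (\<lambda>\<omega>. mean (X \<omega>))"
  by (rule integrable_at_past_arm) auto

lemma loss_expectation:
  assumes t: "t \<ge> 1" and a: "a < K"
  shows "(\<integral>\<omega>. L t \<omega> a \<partial>M) = mean a"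
proof -
  let ?Pi = "PiM {..<K} (\<lambda>_. borel) :: (nat \<Rightarrow> real) measure"
  have loss_vector: "(\<lambda>\<omega>. restrict (L s \<omega>) {..<K}) \<in> M \<rightarrow>\<^sub>M ?Pi" if "s \<ge> 1" for s
    using L_meas[OF that] by (intro measurable_restrict) auto
  have coordinate: "(\<lambda>x. x a) \<in> borel_measurable ?Pi"
    using a by (intro measurable_component_singleton) auto
  have "(\<integral>\<omega>. L t \<omega> a \<partial>M) = (\<integral>x. x a \<partial>distr M ?Pi (\<lambda>\<omega>. restrict (L t \<omega>) {..<K}))"
    using integral_distr[OF loss_vector[OF t] coordinate] a by simp
  also have "\<dots> = (\<integral>x. x a \<partial>distr M ?Pi (\<lambda>\<omega>. restrict (L 1 \<omega>) {..<K}))"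
    using L_ident[OF t] by simp
  also have "\<dots> = mean a"
    using integral_distr[OF loss_vector[of 1] coordinate] a by (simp add: mean_def)
  finally show ?thesis .
qed

lemma integral_loss_times_past_indicator:
  assumes t: "t \<ge> 1" and a: "a < K" and E: "E \<in> past t"
  shows "(\<integral>\<omega>. L t \<omega> a * indicator E \<omega> \<partial>M) = (\<integral>\<omega>. mean a * indicator E \<omega> \<partial>M)"
proof -
  interpret past: sigma_algebra "space M" "past t" by (rule sigma_algebra_past)
  have E_event: "E \<in> events" using E past_subset_events[OF t] by auto
  have loss_generated: "sigma_sets (space M) {(\<lambda>\<omega>. L t \<omega> a) -` C \<inter> space M | C. C \<in> sets borel}
      \<subseteq> sigma_sets (space M) (loss_events M K L t)"
  proof (rule sigma_sets_mono', rule subsetI)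
    fix D assume "D \<in> {(\<lambda>\<omega>. L t \<omega> a) -` C \<inter> space M | C. C \<in> sets borel}"
    then obtain C where "C \<in> sets borel" "D = {\<omega>\<in>space M. L t \<omega> a \<in> C}" by blast
    with a show "D \<in> loss_events M K L t" unfolding loss_events_def by blast
  qed
  have "indep_var borel (\<lambda>\<omega>. L t \<omega> a) borel (indicator E :: 'a \<Rightarrow> real)"
    using L_fresh[OF t] L_meas[OF t a] _ loss_generated past.sigma_sets_indicator_preimages_subset[OF E]
    by (rule indep_var_if_indep_set) (use E_event in simp)
  then have "(\<integral>\<omega>. L t \<omega> a * indicator E \<omega> \<partial>M) = (\<integral>\<omega>. L t \<omega> a \<partial>M) * (\<integral>\<omega>. indicator E \<omega> \<partial>M)"
    using loss_integrable[OF t a] E_event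
    by (intro indep_var_lebesgue_integral) (auto simp: emeasure_eq_measure)
  then show ?thesis using loss_expectation[OF t a] by simp
qed

lemma integral_loss_at_past_arm:
  assumes t: "t \<ge> 1" and X: "past_arm t X" and B: "B \<in> past t"
  shows "(\<integral>\<omega>. L t \<omega> (X \<omega>) * indicator B \<omega> \<partial>M) = (\<integral>\<omega>. mean (X \<omega>) * indicator B \<omega> \<partial>M)"
proof -
  interpret past: sigma_algebra "space M" "past t" by (rule sigma_algebra_past)
  have B_event: "B \<in> events" using B past_subset_events[OF t] by auto
  have X_less: "\<And>\<omega>. \<omega> \<in> space M \<Longrightarrow> X \<omega> < K" and X_past: "\<And>a. {\<omega>\<in>space M. X \<omega> = a} \<in> past t"
    using X unfolding past_arm_def by auto
  note split_at_X = integral_at_finite_index[OF X_less past_arm_events[OF t X]]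
  have "(\<integral>\<omega>. L t \<omega> (X \<omega>) * indicator B \<omega> \<partial>M)
      = (\<Sum>a<K. \<integral>\<omega>. L t \<omega> a * indicator B \<omega> * indicator {\<omega>\<in>space M. X \<omega> = a} \<omega> \<partial>M)"
    using split_at_X[where F="\<lambda>\<omega> a. L t \<omega> a * indicator B \<omega>"] loss_integrable[OF t] B_event
    by (simp add: integrable_real_mult_indicator)
  also have "\<dots> = (\<Sum>a<K. \<integral>\<omega>. mean a * indicator B \<omega> * indicator {\<omega>\<in>space M. X \<omega> = a} \<omega> \<partial>M)"
    unfolding mult.assoc indicator_inter_arith[symmetric]
    by (rule sum.cong[OF refl], rule integral_loss_times_past_indicator[OF t]) (use B X_past in auto)
  also have "\<dots> = (\<integral>\<omega>. mean (X \<omega>) * indicator B \<omega> \<partial>M)"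
    using split_at_X[where F="\<lambda>\<omega> a. mean a * indicator B \<omega>"] B_event
    by (simp add: emeasure_eq_measure)
  finally show ?thesis .
qed

lemma integral_loss_diff_at_past_arms:
  assumes t: "t \<ge> 1" and X: "past_arm t X" and Y: "past_arm t Y" and B: "B \<in> past t"
  shows "(\<integral>\<omega>. (L t \<omega> (X \<omega>) - L t \<omega> (Y \<omega>)) * indicator B \<omega> \<partial>M)
       = (\<integral>\<omega>. (mean (X \<omega>) - mean (Y \<omega>)) * indicator B \<omega> \<partial>M)"
proof -
  have B_event: "B \<in> events" using B past_subset_events[OF t] by auto
  note integrable_loss = integrable_real_mult_indicator[OF B_event integrable_loss_at_past_arm[OF t]]
  note integrable_mean = integrable_real_mult_indicator[OF B_event integrable_mean_at_past_arm[OF t]]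
  show ?thesis
    unfolding left_diff_distrib
    using integrable_loss[OF X] integrable_loss[OF Y] integrable_mean[OF X] integrable_mean[OF Y]
      integral_loss_at_past_arm[OF t X B] integral_loss_at_past_arm[OF t Y B]
    by (simp add: Bochner_Integration.integral_diff)
qed

definition best_ordering :: "nat list" where
  "best_ordering = sort_key mean (sorted_list_of_set {..<K})"

lemma best_ordering_permutation: "best_ordering \<in> permutations_of_set {..<K}"
  unfolding best_ordering_def permutations_of_set_def by simp

lemma best_ordering_choice:
  assumes "A \<subseteq> {..<K}" "x \<in> A"
  shows "order_choice best_ordering A \<in> A \<and> mean (order_choice best_ordering A) \<le> mean x"
  using sorted_hd_filter_le[of mean best_ordering x "\<lambda>y. y \<in> A"] assms
  unfolding order_choice_def best_ordering_def by auto

lemma internal_round_le_ordering_round: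
  assumes t: "t \<ge> 1" and j: "j < K"
  shows "(\<integral>\<omega>. (L t \<omega> (k t \<omega>) - L t \<omega> j) * indicator {\<omega>\<in>space M. k t \<omega> = i \<and> j \<in> S t \<omega>} \<omega> \<partial>M)
       \<le> (\<integral>\<omega>. L t \<omega> (k t \<omega>) - L t \<omega> (order_choice best_ordering (S t \<omega>)) \<partial>M)"
proof -
  interpret past: sigma_algebra "space M" "past t" by (rule sigma_algebra_past)
  let ?E = "{\<omega>\<in>space M. k t \<omega> = i \<and> j \<in> S t \<omega>}"
  let ?best = "\<lambda>\<omega>. order_choice best_ordering (S t \<omega>)"
  have arm: "past_arm t (k t)"
    using past_arm_of_round[OF t, of "\<lambda>A b. b"] by auto
  have fixed: "past_arm t (\<lambda>_. j)"
    using past_arm_of_round[OF t, of "\<lambda>A b. j"] j by auto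
  have best: "past_arm t ?best"
    using past_arm_of_round[OF t, of "\<lambda>A b. order_choice best_ordering A"] best_ordering_choice
    by blast
  have E: "?E \<in> past t"
    using past_event_of_round[OF t, of "\<lambda>A b. b = i \<and> j \<in> A"] by simp
  have mean_best_le: "mean (?best \<omega>) \<le> mean x" if "\<omega> \<in> space M" "x \<in> S t \<omega>" for \<omega> x
    using best_ordering_choice[of "S t \<omega>" x] S_valid[OF t] that by blast
  have "(\<integral>\<omega>. (L t \<omega> (k t \<omega>) - L t \<omega> j) * indicator ?E \<omega> \<partial>M)
      = (\<integral>\<omega>. (mean (k t \<omega>) - mean j) * indicator ?E \<omega> \<partial>M)"
    using integral_loss_diff_at_past_arms[OF t arm fixed E] by simp
  also have "\<dots> \<le> (\<integral>\<omega>. (mean (k t \<omega>) - mean (?best \<omega>)) * indicator (space M) \<omega> \<partial>M)"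
  proof (rule integral_mono)
    show "integrable M (\<lambda>\<omega>. (mean (k t \<omega>) - mean j) * indicator ?E \<omega>)"
      using E past_subset_events[OF t] integrable_mean_at_past_arm[OF t arm]
      by (intro integrable_real_mult_indicator integrable_diff) auto
    show "integrable M (\<lambda>\<omega>. (mean (k t \<omega>) - mean (?best \<omega>)) * indicator (space M) \<omega>)"
      using integrable_mean_at_past_arm[OF t arm] integrable_mean_at_past_arm[OF t best]
      by (intro integrable_real_mult_indicator integrable_diff) auto
    fix \<omega> assume \<omega>: "\<omega> \<in> space M"
    \<comment> \<open>On ?E the best available arm beats j, elsewhere it beats the played arm.\<close>
    show "(mean (k t \<omega>) - mean j) * indicator ?E \<omega> \<le> (mean (k t \<omega>) - mean (?best \<omega>)) * indicator (space M) \<omega>"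
      using mean_best_le[OF \<omega>] k_valid[OF t \<omega>] \<omega> by (auto simp: indicator_def)
  qed
  also have "\<dots> = (\<integral>\<omega>. (L t \<omega> (k t \<omega>) - L t \<omega> (?best \<omega>)) * indicator (space M) \<omega> \<partial>M)"
    using integral_loss_diff_at_past_arms[OF t arm best past.top] by simp
  also have "\<dots> = (\<integral>\<omega>. L t \<omega> (k t \<omega>) - L t \<omega> (?best \<omega>) \<partial>M)"
    by (intro Bochner_Integration.integral_cong) auto
  finally show ?thesis .
qed

lemma expected_internal_regret_le_ordering_regret:
  assumes j: "j < K"
  shows "expectation (internal_regret L S k T i j) \<le> expectation (ordering_regret L S k T best_ordering)"
proof -
  define E where "E t = {\<omega>\<in>space M. k t \<omega> = i \<and> j \<in> S t \<omega>}" for t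
  define best where "best t \<omega> = order_choice best_ordering (S t \<omega>)" for t \<omega>
  have arm: "past_arm t (k t)" and fixed: "past_arm t (\<lambda>_. j)" and best: "past_arm t (best t)"
    if "t \<in> {1..T}" for t
    using that j best_ordering_choice unfolding best_def
    by (auto intro!: past_arm_of_round[of t "\<lambda>A b. b"] past_arm_of_round[of t "\<lambda>A b. j"]
        past_arm_of_round[of t "\<lambda>A b. order_choice best_ordering A"])
  have E_event: "E t \<in> events" if "t \<in> {1..T}" for t
    using that past_event_of_round[of t "\<lambda>A b. b = i \<and> j \<in> A"] past_subset_events[of t]
    unfolding E_def by auto
  have "expectation (internal_regret L S k T i j)
      = expectation (\<lambda>\<omega>. \<Sum>t=1..T. (L t \<omega> (k t \<omega>) - L t \<omega> j) * indicator (E t) \<omega>)"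
    unfolding internal_regret_def E_def
    by (intro Bochner_Integration.integral_cong refl sum.cong) (auto simp: indicator_def)
  also have "\<dots> = (\<Sum>t=1..T. expectation (\<lambda>\<omega>. (L t \<omega> (k t \<omega>) - L t \<omega> j) * indicator (E t) \<omega>))"
    using arm fixed E_event integrable_loss_at_past_arm
    by (intro Bochner_Integration.integral_sum integrable_real_mult_indicator integrable_diff) auto
  also have "\<dots> \<le> (\<Sum>t=1..T. expectation (\<lambda>\<omega>. L t \<omega> (k t \<omega>) - L t \<omega> (best t \<omega>)))"
    using internal_round_le_ordering_round j unfolding E_def best_def by (intro sum_mono) auto
  also have "\<dots> = expectation (ordering_regret L S k T best_ordering)"
    using arm best integrable_loss_at_past_arm unfolding ordering_regret_def best_def
    by (intro Bochner_Integration.integral_sum[symmetric] integrable_diff) auto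
  finally show ?thesis .
qed

end

theorem mainTheorem4:
  fixes M :: "'a measure" and N :: "'b measure" and U :: "'a \<Rightarrow> 'b"
    and K T :: nat and \<mu> :: "nat \<Rightarrow> real"
    and L :: "nat \<Rightarrow> 'a \<Rightarrow> nat \<Rightarrow> real"
    and S :: "nat \<Rightarrow> 'a \<Rightarrow> nat set" and k :: "nat \<Rightarrow> 'a \<Rightarrow> nat"
  assumes P: "prob_space M"
    and U_meas: "U \<in> M \<rightarrow>\<^sub>M N"
    and L_meas: "\<And>t j. t \<ge> 1 \<Longrightarrow> j < K \<Longrightarrow> (\<lambda>\<omega>. L t \<omega> j) \<in> borel_measurable M"
    and L_range: "\<And>t j \<omega>. t \<ge> 1 \<Longrightarrow> j < K \<Longrightarrow> \<omega> \<in> space M \<Longrightarrow> L t \<omega> j \<in> {0..1}"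
    and L_indep: "prob_space.indep_sets M (\<lambda>t. sigma_sets (space M) (loss_events M K L t)) {1..}"
    and L_ident: "\<And>t. t \<ge> 1 \<Longrightarrow>
        distr M (PiM {..<K} (\<lambda>_. borel)) (\<lambda>\<omega>. restrict (L t \<omega>) {..<K})
      = distr M (PiM {..<K} (\<lambda>_. borel)) (\<lambda>\<omega>. restrict (L 1 \<omega>) {..<K})"
    and mean: "\<And>j. j < K \<Longrightarrow> \<mu> j = prob_space.expectation M (\<lambda>\<omega>. L 1 \<omega> j)"
    and L_fresh: "\<And>t. t \<ge> 1 \<Longrightarrow> prob_space.indep_set M
        (sigma_sets (space M) (loss_events M K L t)) (past_sigma M N U K L S k t)"
    and S_valid: "\<And>t \<omega>. t \<ge> 1 \<Longrightarrow> \<omega> \<in> space M \<Longrightarrow> S t \<omega> \<subseteq> {..<K} \<and> S t \<omega> \<noteq> {}"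
    and k_valid: "\<And>t \<omega>. t \<ge> 1 \<Longrightarrow> \<omega> \<in> space M \<Longrightarrow> k t \<omega> \<in> S t \<omega>"
    and S_adapted: "\<And>t A. t \<ge> 1 \<Longrightarrow> {\<omega>\<in>space M. S t \<omega> = A} \<in> sigma_sets (space M)
        (\<Union>s\<in>{1..<t}. loss_events M K L s \<union> avail_events M S s \<union> arm_events M k s)"
    and k_adapted: "\<And>t i. t \<ge> 1 \<Longrightarrow> {\<omega>\<in>space M. k t \<omega> = i} \<in> sigma_sets (space M)
        (rand_events M N U \<union> (\<Union>s\<in>{1..t}. avail_events M S s)
         \<union> (\<Union>s\<in>{1..<t}. obs_events M L k s \<union> arm_events M k s))"
  shows "Max ((\<lambda>(i, j). prob_space.expectation M (internal_regret L S k T i j))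
                ` ({..<K} \<times> {..<K}))
       \<le> Max ((\<lambda>\<sigma>. prob_space.expectation M (ordering_regret L S k T \<sigma>))
                ` permutations_of_set {..<K})"
proof -
  interpret sleeping_bandit M N U K L S k
    by (rule sleeping_bandit.intro[OF P sleeping_bandit_axioms.intro])
       (fact U_meas L_meas L_range L_ident L_fresh S_valid k_valid S_adapted k_adapted)+
  obtain \<omega> where "\<omega> \<in> space M" using not_empty by blast
  then have "K > 0" using S_valid[of 1 \<omega>] by fastforce
  have "Max ((\<lambda>(i, j). expectation (internal_regret L S k T i j)) ` ({..<K} \<times> {..<K}))
      \<le> expectation (ordering_regret L S k T best_ordering)"
    using \<open>K > 0\<close> expected_internal_regret_le_ordering_regret by (intro Max.boundedI) auto
  also have "\<dots> \<le> Max ((\<lambda>\<sigma>. expectation (ordering_regret L S k T \<sigma>)) ` permutations_of_set {..<K})"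
    using best_ordering_permutation by (intro Max_ge) auto
  finally show ?thesis .
qed

end
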